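(* Let $r_1, r_2 \geq 0$ be integers and let $c > 0$ be a real number. Let $f_1 : \mathbb{R}^{r_1} \to \mathbb{R}$ and $f_2 : \mathbb{R}^{r_2} \to \mathbb{R}$ be functions such that, for each $i = 1, 2$: (1) $f_i(x) \geq 0$ for all $x$, and $f_i(x) = 0$ if and only if $x = 0$; (2) $f_i$ is continuous; (3) $f_i(\lambda x) = |\lambda|^{c} f_i(x)$ for all $x \in \mathbb{R}^{r_i}$ and all $\lambda \in \mathbb{R}$. Equip $\mathbb{Z}^{r_1}$ with the counting measure and $\mathbb{R}^{r_1}$, $\mathbb{R}^{r_2}$ with Lebesgue measure, and equip the products $\mathbb{Z}^{r_1}\times\mathbb{R}^{r_2}$ and $\mathbb{R}^{r_1}\times\mathbb{R}^{r_2}$ with the product measures $\mu$. For $B > 0$ let \[ I(B) = \{ (n, y) \in \mathbb{Z}^{r_1} \times \mathbb{R}^{r_2} : f_1(n) + f_2(y) \leq B \}, \qquad V(B) = \{ (x, y) \in \mathbb{R}^{r_1} \times \mathbb{R}^{r_2} : f_1(x) + f_2(y) \leq B \}. \] Then \[ \lim_{B \to \infty} \frac{\mu(I(B))}{\mu(V(B))} = 1. \] *)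

theory Defs
  imports "HOL-Analysis.Analysis"
begin

text \<open>Euclidean space R^r is represented as the extensional functions
  on the index set {..<r}, i.e. PiE {..<r} (\<lambda>_. UNIV) :: (nat \<Rightarrow> real) set.
  This allows r = 0 (a single point).\<close>

definition rvec :: "nat \<Rightarrow> (nat \<Rightarrow> real) set" where
  "rvec r = PiE {..<r} (\<lambda>_. UNIV)"

definition zvec :: "nat \<Rightarrow> (nat \<Rightarrow> real) set" where
  "zvec r = PiE {..<r} (\<lambda>_. \<int>)"

definition zero_vec :: "nat \<Rightarrow> nat \<Rightarrow> real" where
  "zero_vec r = restrict (\<lambda>_. 0) {..<r}"

definition scale_vec :: "nat \<Rightarrow> real \<Rightarrow> (nat \<Rightarrow> real) \<Rightarrow> nat \<Rightarrow> real" where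
  "scale_vec r l x = restrict (\<lambda>i. l * x i) {..<r}"

definition leb_vec :: "nat \<Rightarrow> (nat \<Rightarrow> real) measure" where
  "leb_vec r = PiM {..<r} (\<lambda>_. lborel)"

definition count_zvec :: "nat \<Rightarrow> (nat \<Rightarrow> real) measure" where
  "count_zvec r = count_space (zvec r)"

definition admissible :: "nat \<Rightarrow> real \<Rightarrow> ((nat \<Rightarrow> real) \<Rightarrow> real) \<Rightarrow> bool" where
  "admissible r c f \<longleftrightarrow>
     (\<forall>x\<in>rvec r. f x \<ge> 0 \<and> (f x = 0 \<longleftrightarrow> x = zero_vec r)) \<and>
     continuous_on (rvec r) f \<and>
     (\<forall>x\<in>rvec r. \<forall>l::real. f (scale_vec r l x) = \<bar>l\<bar> powr c * f x)"

definition I_set :: "nat \<Rightarrow> nat \<Rightarrow> ((nat \<Rightarrow> real) \<Rightarrow> real) \<Rightarrow> ((nat \<Rightarrow> real) \<Rightarrow> real)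
    \<Rightarrow> real \<Rightarrow> ((nat \<Rightarrow> real) \<times> (nat \<Rightarrow> real)) set" where
  "I_set r1 r2 f1 f2 B = {(n, y). n \<in> zvec r1 \<and> y \<in> rvec r2 \<and> f1 n + f2 y \<le> B}"

definition V_set :: "nat \<Rightarrow> nat \<Rightarrow> ((nat \<Rightarrow> real) \<Rightarrow> real) \<Rightarrow> ((nat \<Rightarrow> real) \<Rightarrow> real)
    \<Rightarrow> real \<Rightarrow> ((nat \<Rightarrow> real) \<times> (nat \<Rightarrow> real)) set" where
  "V_set r1 r2 f1 f2 B = {(x, y). x \<in> rvec r1 \<and> y \<in> rvec r2 \<and> f1 x + f2 y \<le> B}"

end

theory Submission
  imports Defs
begin

text \<open>Rounding every coordinate down maps Lebesgue measure on \<open>R^r1\<close> to counting measure on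
  \<open>Z^r1\<close>, so \<open>\<mu>(I(B))\<close> is the volume of \<open>{(x, y). f1 \<lfloor>x\<rfloor> + f2 y \<le> B}\<close>. By homogeneity,
  \<open>\<mu>(V(B)) = B^((r1 + r2)/c) \<mu>(V(1))\<close> with \<open>0 < \<mu>(V(1)) < \<infinity>\<close>. Rescaling by \<open>B^(-1/c)\<close> moves
  \<open>x\<close> and \<open>\<lfloor>x\<rfloor>\<close> into a fixed cube and within distance \<open>B^(-1/c)\<close> of each other, so uniform
  continuity of \<open>f1\<close> there gives \<open>|f1 x - f1 \<lfloor>x\<rfloor>| \<le> \<epsilon> B\<close>. Hence the set above lies between
  \<open>V((1 - \<epsilon>) B)\<close> and \<open>V((1 + \<epsilon>) B)\<close>, and the ratio is squeezed between
  \<open>(1 - \<epsilon>)^((r1 + r2)/c)\<close> and \<open>(1 + \<epsilon>)^((r1 + r2)/c)\<close>.\<close>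

lemma space_leb_vec [simp]: "space (leb_vec r) = rvec r"
  by (simp add: leb_vec_def rvec_def space_PiM)

lemma sets_count_zvec [simp]: "sets (count_zvec r) = Pow (zvec r)"
  by (simp add: count_zvec_def)

lemma countable_zvec: "countable (zvec r)"
  unfolding zvec_def by (intro countable_PiE) (auto simp: Ints_def)

lemma zvec_subset_rvec: "zvec r \<subseteq> rvec r"
  by (auto simp: zvec_def rvec_def PiE_iff)

lemma scale_vec_in_rvec [simp]: "scale_vec r s x \<in> rvec r"
  by (simp add: scale_vec_def rvec_def)

interpretation lborel_product: product_sigma_finite "\<lambda>_::nat. lborel::real measure"
  by standard

lemma sigma_finite_leb_vec: "sigma_finite_measure (leb_vec r)"
proof -
  interpret finite_product_sigma_finite "\<lambda>_::nat. lborel::real measure" "{..<r}"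
    by standard simp
  show ?thesis
    unfolding leb_vec_def by (rule sigma_finite_measure_axioms)
qed

lemma emeasure_leb_vec_PiE:
  assumes "\<And>i. i < r \<Longrightarrow> A i \<in> sets borel"
  shows "emeasure (leb_vec r) (PiE {..<r} A) = (\<Prod>i<r. emeasure lborel (A i))"
  unfolding leb_vec_def using assms by (subst lborel_product.emeasure_PiM) auto

lemma measurable_id_leb_vec_borel: "(\<lambda>x. x) \<in> borel_measurable (leb_vec r)"
proof (rule measurable_coordinatewise_then_product)
  fix i
  show "(\<lambda>x. x i) \<in> borel_measurable (leb_vec r)"
  proof (cases "i < r")
    case True
    then show ?thesis
      unfolding leb_vec_def by (simp add: measurable_component_singleton)
  next
    case False
    have "(\<lambda>x. undefined) \<in> borel_measurable (leb_vec r)" by simp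
    then show ?thesis
      by (rule measurable_cong[THEN iffD1, rotated])
         (use False in \<open>auto simp: rvec_def PiE_def extensional_def\<close>)
  qed
qed

lemma continuous_on_restrict_lessThan: "continuous_on UNIV (\<lambda>x::nat \<Rightarrow> real. restrict x {..<r})"
proof (rule continuous_on_coordinatewise_then_product)
  fix i
  show "continuous_on UNIV (\<lambda>x::nat \<Rightarrow> real. restrict x {..<r} i)"
    by (cases "i < r") (auto intro: continuous_on_product_coordinates)
qed

lemma borel_measurable_leb_vec_continuous_on:
  assumes "continuous_on (rvec r) f"
  shows "f \<in> borel_measurable (leb_vec r)"
proof -
  let ?g = "\<lambda>x. f (restrict x {..<r})"
  have "continuous_on UNIV ?g"
    by (rule continuous_on_compose2[OF assms continuous_on_restrict_lessThan])
       (auto simp: rvec_def split: if_splits)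
  then have "?g \<in> borel_measurable (leb_vec r)"
    using measurable_comp[OF measurable_id_leb_vec_borel borel_measurable_continuous_onI]
    by (simp add: comp_def)
  then show ?thesis
    by (rule measurable_cong[THEN iffD1, rotated])
       (auto simp: rvec_def PiE_def extensional_def restrict_def intro!: arg_cong[where f=f])
qed

lemma sum_sublevel_in_sets_pair_measure:
  fixes f :: "'a \<Rightarrow> real" and g :: "'b \<Rightarrow> real"
  assumes "f \<in> borel_measurable M" "g \<in> borel_measurable N"
  shows "{(x, y). x \<in> space M \<and> y \<in> space N \<and> f x + g y \<le> B} \<in> sets (M \<Otimes>\<^sub>M N)"
proof -
  have "(\<lambda>p. f (fst p)) \<in> borel_measurable (M \<Otimes>\<^sub>M N)" "(\<lambda>p. g (snd p)) \<in> borel_measurable (M \<Otimes>\<^sub>M N)"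
    using assms by (auto intro: measurable_compose[OF measurable_fst] measurable_compose[OF measurable_snd])
  then have "{p \<in> space (M \<Otimes>\<^sub>M N). f (fst p) + g (snd p) \<le> B} \<in> sets (M \<Otimes>\<^sub>M N)"
    by (intro borel_measurable_le borel_measurable_add) auto
  also have "{p \<in> space (M \<Otimes>\<^sub>M N). f (fst p) + g (snd p) \<le> B}
      = {(x, y). x \<in> space M \<and> y \<in> space N \<and> f x + g y \<le> B}"
    by (auto simp: space_pair_measure)
  finally show ?thesis .
qed

section \<open>Scaling Lebesgue measure\<close>

lemma emeasure_lborel_vimage_mult:
  assumes "s > (0::real)" "A \<in> sets borel"
  shows "emeasure lborel ((*) s -` A) = ennreal (1/s) * emeasure lborel A"
proof -
  have "emeasure lborel ((*) s -` A) = emeasure (distr lborel borel ((*) s)) A"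
    using assms by (subst emeasure_distr) auto
  also have "\<dots> = emeasure (density lborel (\<lambda>_. inverse \<bar>s\<bar>)) A"
    using assms by (simp add: lborel_distr_mult)
  also have "\<dots> = ennreal (1/s) * emeasure lborel A"
    using assms by (subst emeasure_density_const) (auto simp: divide_inverse)
  finally show ?thesis .
qed

lemma measurable_scale_vec [measurable]: "scale_vec r s \<in> measurable (leb_vec r) (leb_vec r)"
  unfolding scale_vec_def leb_vec_def by (intro measurable_restrict) measurable

lemma leb_vec_scale:
  assumes "s > 0"
  shows "scale_measure (ennreal s ^ r) (distr (leb_vec r) (leb_vec r) (scale_vec r s)) = leb_vec r"
  unfolding leb_vec_def
proof (rule lborel_product.PiM_eqI)
  fix A assume A: "\<And>i. i \<in> {..<r} \<Longrightarrow> A i \<in> sets (lborel::real measure)"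
  let ?L = "Pi\<^sub>M {..<r} (\<lambda>_. lborel::real measure)"
  have box: "scale_vec r s -` PiE {..<r} A \<inter> rvec r = PiE {..<r} (\<lambda>i. (*) s -` A i)"
    by (auto simp: scale_vec_def rvec_def PiE_iff)
  have "emeasure (distr ?L ?L (scale_vec r s)) (PiE {..<r} A)
      = emeasure (leb_vec r) (scale_vec r s -` PiE {..<r} A \<inter> rvec r)"
    using A measurable_scale_vec[of r s]
    by (subst emeasure_distr) (auto simp: leb_vec_def space_PiM rvec_def intro!: sets_PiM_I_finite)
  also have "\<dots> = (\<Prod>i<r. ennreal (1/s) * emeasure lborel (A i))"
    unfolding box using A assms
    by (subst emeasure_leb_vec_PiE)
       (auto intro!: prod.cong emeasure_lborel_vimage_mult measurable_sets_borel[of "(*) s" borel])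
  finally have "ennreal s ^ r * emeasure (distr ?L ?L (scale_vec r s)) (PiE {..<r} A)
      = (\<Prod>i<r. ennreal s * (ennreal (1/s) * emeasure lborel (A i)))"
    by (simp add: prod.distrib)
  also have "\<dots> = (\<Prod>i<r. emeasure lborel (A i))"
    using assms by (intro prod.cong refl) (simp add: mult.assoc[symmetric] ennreal_mult[symmetric])
  finally show "emeasure (scale_measure (ennreal s ^ r) (distr ?L ?L (scale_vec r s))) (PiE {..<r} A)
      = (\<Prod>i\<in>{..<r}. emeasure lborel (A i))"
    by simp
qed simp_all

lemma emeasure_leb_vec_scale:
  assumes "s > 0" "X \<in> sets (leb_vec r)"
  shows "emeasure (leb_vec r) X = ennreal s ^ r * emeasure (leb_vec r) (scale_vec r s -` X \<inter> rvec r)"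
proof -
  have "emeasure (leb_vec r) X
      = emeasure (scale_measure (ennreal s ^ r) (distr (leb_vec r) (leb_vec r) (scale_vec r s))) X"
    by (simp add: leb_vec_scale[OF assms(1)])
  also have "\<dots> = ennreal s ^ r * emeasure (leb_vec r) (scale_vec r s -` X \<inter> rvec r)"
    using assms by (simp add: emeasure_distr)
  finally show ?thesis .
qed

lemma nn_integral_leb_vec_scale:
  assumes "s > 0" "g \<in> borel_measurable (leb_vec r)"
  shows "(\<integral>\<^sup>+x. g x \<partial>leb_vec r) = ennreal s ^ r * (\<integral>\<^sup>+x. g (scale_vec r s x) \<partial>leb_vec r)"
proof -
  have "(\<integral>\<^sup>+x. g x \<partial>leb_vec r)
      = (\<integral>\<^sup>+x. g x \<partial>scale_measure (ennreal s ^ r) (distr (leb_vec r) (leb_vec r) (scale_vec r s)))"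
    by (simp add: leb_vec_scale[OF assms(1)])
  also have "\<dots> = ennreal s ^ r * (\<integral>\<^sup>+x. g (scale_vec r s x) \<partial>leb_vec r)"
    using assms by (simp add: nn_integral_scale_measure nn_integral_distr)
  finally show ?thesis .
qed

section \<open>Rounding down to the lattice\<close>

definition floor_vec :: "nat \<Rightarrow> (nat \<Rightarrow> real) \<Rightarrow> nat \<Rightarrow> real" where
  "floor_vec r x = restrict (\<lambda>i. real_of_int \<lfloor>x i\<rfloor>) {..<r}"

lemma floor_vec_in_zvec: "floor_vec r x \<in> zvec r"
  by (auto simp: floor_vec_def zvec_def)

lemma floor_vec_vimage_singleton:
  assumes "n \<in> zvec r"
  shows "floor_vec r -` {n} \<inter> rvec r = PiE {..<r} (\<lambda>i. {n i ..< n i + 1})"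
proof -
  have "real_of_int \<lfloor>t\<rfloor> = n i \<longleftrightarrow> t \<in> {n i ..< n i + 1}" if "i < r" for i t
  proof -
    obtain k where "n i = of_int k"
      using assms \<open>i < r\<close> by (auto simp: zvec_def PiE_iff elim!: Ints_cases)
    then show ?thesis by (auto simp: floor_eq_iff)
  qed
  moreover have "n \<in> extensional {..<r}"
    using assms by (auto simp: zvec_def PiE_def)
  ultimately show ?thesis
    by (auto simp: floor_vec_def rvec_def PiE_iff extensional_def fun_eq_iff)
qed

lemma measurable_floor_vec: "floor_vec r \<in> measurable (leb_vec r) (count_zvec r)"
  unfolding count_zvec_def
proof (subst measurable_count_space_eq_countable[OF countable_zvec], intro conjI ballI)
  show "floor_vec r \<in> space (leb_vec r) \<rightarrow> zvec r"
    using floor_vec_in_zvec by auto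
next
  fix n assume "n \<in> zvec r"
  then show "floor_vec r -` {n} \<inter> space (leb_vec r) \<in> sets (leb_vec r)"
    by (simp only: space_leb_vec floor_vec_vimage_singleton, unfold leb_vec_def)
       (intro sets_PiM_I_finite, auto)
qed

text \<open>Each lattice point is hit by a half-open unit cube, of volume one.\<close>

lemma distr_floor_vec: "distr (leb_vec r) (count_zvec r) (floor_vec r) = count_zvec r"
proof (rule measure_eqI_countable[OF _ _ countable_zvec])
  fix n assume n: "n \<in> zvec r"
  have "emeasure (distr (leb_vec r) (count_zvec r) (floor_vec r)) {n}
      = emeasure (leb_vec r) (floor_vec r -` {n} \<inter> rvec r)"
    using n measurable_floor_vec by (subst emeasure_distr) auto
  also have "\<dots> = 1"
    using n by (simp add: floor_vec_vimage_singleton emeasure_leb_vec_PiE)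
  also have "\<dots> = emeasure (count_zvec r) {n}"
    using n by (simp add: count_zvec_def)
  finally show "emeasure (distr (leb_vec r) (count_zvec r) (floor_vec r)) {n} = emeasure (count_zvec r) {n}" .
qed auto

lemma distr_floor_vec_pair:
  "distr (leb_vec r1 \<Otimes>\<^sub>M leb_vec r2) (count_zvec r1 \<Otimes>\<^sub>M leb_vec r2) (\<lambda>(x, y). (floor_vec r1 x, y))
   = count_zvec r1 \<Otimes>\<^sub>M leb_vec r2"
proof -
  have "distr (leb_vec r1) (count_zvec r1) (floor_vec r1) \<Otimes>\<^sub>M distr (leb_vec r2) (leb_vec r2) (\<lambda>y. y)
     = distr (leb_vec r1 \<Otimes>\<^sub>M leb_vec r2) (count_zvec r1 \<Otimes>\<^sub>M leb_vec r2) (\<lambda>(x, y). (floor_vec r1 x, y))"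
    by (rule pair_measure_distr[OF measurable_floor_vec]) (auto simp: sigma_finite_leb_vec)
  then show ?thesis
    by (simp add: distr_floor_vec)
qed

definition I_set_lift :: "nat \<Rightarrow> nat \<Rightarrow> ((nat \<Rightarrow> real) \<Rightarrow> real) \<Rightarrow> ((nat \<Rightarrow> real) \<Rightarrow> real)
    \<Rightarrow> real \<Rightarrow> ((nat \<Rightarrow> real) \<times> (nat \<Rightarrow> real)) set" where
  "I_set_lift r1 r2 f1 f2 B = {(x, y). x \<in> rvec r1 \<and> y \<in> rvec r2 \<and> f1 (floor_vec r1 x) + f2 y \<le> B}"

lemma I_set_lift_eq_vimage:
  "I_set_lift r1 r2 f1 f2 B
   = (\<lambda>(x, y). (floor_vec r1 x, y)) -` I_set r1 r2 f1 f2 B \<inter> space (leb_vec r1 \<Otimes>\<^sub>M leb_vec r2)"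
  by (auto simp: I_set_def I_set_lift_def space_pair_measure floor_vec_in_zvec)

lemma I_set_in_sets:
  assumes "f2 \<in> borel_measurable (leb_vec r2)"
  shows "I_set r1 r2 f1 f2 B \<in> sets (count_zvec r1 \<Otimes>\<^sub>M leb_vec r2)"
  using sum_sublevel_in_sets_pair_measure[of f1 "count_zvec r1", OF _ assms]
  by (simp add: I_set_def count_zvec_def)

lemma V_set_in_sets:
  assumes "f1 \<in> borel_measurable (leb_vec r1)" "f2 \<in> borel_measurable (leb_vec r2)"
  shows "V_set r1 r2 f1 f2 B \<in> sets (leb_vec r1 \<Otimes>\<^sub>M leb_vec r2)"
  using sum_sublevel_in_sets_pair_measure[OF assms] by (simp add: V_set_def)

lemma measurable_floor_vec_pair:
  "(\<lambda>(x, y). (floor_vec r1 x, y)) \<in> measurable (leb_vec r1 \<Otimes>\<^sub>M leb_vec r2) (count_zvec r1 \<Otimes>\<^sub>M leb_vec r2)"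
  using measurable_floor_vec by measurable

lemma I_set_lift_in_sets:
  assumes "f2 \<in> borel_measurable (leb_vec r2)"
  shows "I_set_lift r1 r2 f1 f2 B \<in> sets (leb_vec r1 \<Otimes>\<^sub>M leb_vec r2)"
  unfolding I_set_lift_eq_vimage
  by (rule measurable_sets[OF measurable_floor_vec_pair I_set_in_sets[OF assms]])

lemma emeasure_I_set_eq_lift:
  assumes "f2 \<in> borel_measurable (leb_vec r2)"
  shows "emeasure (count_zvec r1 \<Otimes>\<^sub>M leb_vec r2) (I_set r1 r2 f1 f2 B)
       = emeasure (leb_vec r1 \<Otimes>\<^sub>M leb_vec r2) (I_set_lift r1 r2 f1 f2 B)"
  unfolding I_set_lift_eq_vimage
  by (subst distr_floor_vec_pair[symmetric])
     (rule emeasure_distr[OF measurable_floor_vec_pair I_set_in_sets[OF assms]])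

section \<open>Admissible functions are comparable to a power of the sup norm\<close>

lemma admissible_nonneg: "admissible r c f \<Longrightarrow> x \<in> rvec r \<Longrightarrow> f x \<ge> 0"
  unfolding admissible_def by blast

lemma admissible_pos: "admissible r c f \<Longrightarrow> x \<in> rvec r \<Longrightarrow> x \<noteq> zero_vec r \<Longrightarrow> f x > 0"
  unfolding admissible_def by (metis less_eq_real_def)

lemma admissible_zero: "admissible r c f \<Longrightarrow> f (zero_vec r) = 0"
  unfolding admissible_def by (auto simp: zero_vec_def rvec_def)

lemma admissible_continuous_on: "admissible r c f \<Longrightarrow> continuous_on (rvec r) f"
  unfolding admissible_def by blast

lemma admissible_scale: "admissible r c f \<Longrightarrow> x \<in> rvec r \<Longrightarrow> f (scale_vec r l x) = \<bar>l\<bar> powr c * f x"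
  unfolding admissible_def by blast

lemma admissible_borel_measurable: "admissible r c f \<Longrightarrow> f \<in> borel_measurable (leb_vec r)"
  by (intro borel_measurable_leb_vec_continuous_on admissible_continuous_on)

definition sup_norm :: "nat \<Rightarrow> (nat \<Rightarrow> real) \<Rightarrow> real" where
  "sup_norm r x = Max (insert 0 ((\<lambda>i. \<bar>x i\<bar>) ` {..<r}))"

definition cube :: "nat \<Rightarrow> real \<Rightarrow> (nat \<Rightarrow> real) set" where
  "cube r R = PiE {..<r} (\<lambda>_. {-R..R})"

definition unit_cube_boundary :: "nat \<Rightarrow> (nat \<Rightarrow> real) set" where
  "unit_cube_boundary r = cube r 1 \<inter> (\<Union>i<r. {u. \<bar>u i\<bar> = 1})"

lemma abs_le_sup_norm: "i < r \<Longrightarrow> \<bar>x i\<bar> \<le> sup_norm r x"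
  unfolding sup_norm_def by (intro Max_ge) auto

lemma sup_norm_nonneg: "0 \<le> sup_norm r x"
  unfolding sup_norm_def by (intro Max_ge) auto

lemma sup_norm_le_iff: "0 \<le> R \<Longrightarrow> sup_norm r x \<le> R \<longleftrightarrow> (\<forall>i<r. \<bar>x i\<bar> \<le> R)"
  unfolding sup_norm_def by (subst Max_le_iff) auto

lemma sup_norm_attained: "sup_norm r x > 0 \<Longrightarrow> \<exists>i<r. \<bar>x i\<bar> = sup_norm r x"
  using Max_in[of "insert 0 ((\<lambda>i. \<bar>x i\<bar>) ` {..<r})"] unfolding sup_norm_def by auto

lemma sup_norm_eq_0_imp_zero_vec:
  assumes "x \<in> rvec r" "sup_norm r x = 0"
  shows "x = zero_vec r"
proof
  fix i
  show "x i = zero_vec r i"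
    using assms abs_le_sup_norm[of i r x] by (cases "i < r") (auto simp: zero_vec_def rvec_def)
qed

lemma cube_subset_rvec: "cube r R \<subseteq> rvec r"
  by (auto simp: cube_def rvec_def PiE_iff)

lemma mem_cube_iff: "0 \<le> R \<Longrightarrow> x \<in> cube r R \<longleftrightarrow> x \<in> rvec r \<and> sup_norm r x \<le> R"
  unfolding cube_def rvec_def by (auto simp: sup_norm_le_iff PiE_iff abs_le_iff minus_le_iff)

lemma compact_cube: "compact (cube r R)"
proof -
  have "cube r R = PiE UNIV (\<lambda>i. if i < r then {-R..R} else {undefined})"
  proof (rule set_eqI)
    fix x
    show "x \<in> cube r R \<longleftrightarrow> x \<in> PiE UNIV (\<lambda>i. if i < r then {-R..R} else {undefined})"
      unfolding cube_def PiE_UNIV_domain by (simp add: PiE_def Pi_def extensional_def) (metis singletonD singletonI)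
  qed
  moreover have "compactin (product_topology (\<lambda>_. euclidean) UNIV)
      (PiE UNIV (\<lambda>i. if i < r then {-R..R} else {undefined::real}))"
    by (subst compactin_PiE) auto
  ultimately show ?thesis
    by (simp add: euclidean_product_topology)
qed

lemma compact_unit_cube_boundary: "compact (unit_cube_boundary r)"
proof -
  have "closed {u::nat \<Rightarrow> real. \<bar>u i\<bar> = 1}" for i
    by (rule closed_Collect_eq) (auto intro!: continuous_on_rabs continuous_on_product_coordinates)
  then show ?thesis
    unfolding unit_cube_boundary_def by (intro compact_Int_closed compact_cube closed_UN) auto
qed

lemma admissible_bounds_on_unit_cube_boundary:
  assumes "admissible r c f"
  obtains m K where "0 < m" "0 < K" "\<And>u. u \<in> unit_cube_boundary r \<Longrightarrow> m \<le> f u \<and> f u \<le> K"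
proof (cases "unit_cube_boundary r = {}")
  case True
  then show ?thesis using that[of 1 1] by auto
next
  case False
  have sub: "unit_cube_boundary r \<subseteq> rvec r"
    using cube_subset_rvec by (auto simp: unit_cube_boundary_def)
  have cont: "continuous_on (unit_cube_boundary r) f"
    using admissible_continuous_on[OF assms] sub by (rule continuous_on_subset)
  obtain a where a: "a \<in> unit_cube_boundary r" "\<And>u. u \<in> unit_cube_boundary r \<Longrightarrow> f a \<le> f u"
    using continuous_attains_inf[OF compact_unit_cube_boundary False cont] by blast
  obtain b where b: "b \<in> unit_cube_boundary r" "\<And>u. u \<in> unit_cube_boundary r \<Longrightarrow> f u \<le> f b"
    using continuous_attains_sup[OF compact_unit_cube_boundary False cont] by blast
  have "zero_vec r \<notin> unit_cube_boundary r"
    by (auto simp: unit_cube_boundary_def zero_vec_def)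
  then have "f a > 0" "f b > 0"
    using a(1) b(1) sub admissible_pos[OF assms] by (metis subsetD)+
  then show ?thesis
    using that a b by blast
qed

text \<open>Divide \<open>x\<close> by its sup norm to land on the boundary of the unit cube.\<close>

lemma admissible_sup_norm_bounds:
  assumes "admissible r c f"
  obtains m K where "0 < m" "0 < K"
    "\<And>x. x \<in> rvec r \<Longrightarrow> m * sup_norm r x powr c \<le> f x \<and> f x \<le> K * sup_norm r x powr c"
proof -
  obtain m K where m: "0 < m" and K: "0 < K"
    and bounds: "\<And>u. u \<in> unit_cube_boundary r \<Longrightarrow> m \<le> f u \<and> f u \<le> K"
    using admissible_bounds_on_unit_cube_boundary[OF assms] by blast
  have "m * sup_norm r x powr c \<le> f x \<and> f x \<le> K * sup_norm r x powr c" if x: "x \<in> rvec r" for x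
  proof (cases "sup_norm r x = 0")
    case True
    then show ?thesis
      using admissible_zero[OF assms] sup_norm_eq_0_imp_zero_vec[OF x] by simp
  next
    case False
    define n where "n = sup_norm r x"
    have n: "n > 0"
      using False sup_norm_nonneg[of r x] unfolding n_def by linarith
    define u where "u = scale_vec r (1/n) x"
    obtain i where i: "i < r" "\<bar>x i\<bar> = n"
      using sup_norm_attained n unfolding n_def by blast
    have "-1 \<le> x j / n \<and> x j / n \<le> 1" if "j < r" for j
      using abs_le_sup_norm[OF that, of x] n by (simp add: n_def abs_le_iff divide_le_eq le_divide_eq)
    then have "u \<in> cube r 1"
      by (simp add: u_def cube_def scale_vec_def)
    moreover have "\<bar>u i\<bar> = 1"
      using i n by (simp add: u_def scale_vec_def abs_mult)
    ultimately have "m \<le> f u \<and> f u \<le> K"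
      using i bounds by (auto simp: unit_cube_boundary_def)
    moreover have "f x = f (scale_vec r n u)"
      using x n by (auto simp: u_def scale_vec_def rvec_def PiE_def extensional_def intro!: arg_cong[where f=f])
    moreover have "f (scale_vec r n u) = n powr c * f u"
      using admissible_scale[OF assms, of u n] n by (simp add: u_def)
    ultimately show ?thesis
      using n by (simp add: n_def[symmetric] mult.commute)
  qed
  then show ?thesis
    using that m K by blast
qed

lemma le_powr_inverse_if_mult_powr_le:
  fixes a m B c :: real
  assumes "0 < m" "0 < c" "0 \<le> a" "m * a powr c \<le> B"
  shows "a \<le> (B / m) powr (1 / c)"
proof -
  have "(a powr c) powr (1/c) \<le> (B / m) powr (1/c)"
    using assms by (intro powr_mono2) (auto simp: le_divide_eq mult.commute)
  then show ?thesis
    using assms by (simp add: powr_powr)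
qed

lemma admissible_sublevel_subset_cube:
  assumes "admissible r c f" "c > 0"
  obtains R where "0 \<le> R" "{x \<in> rvec r. f x \<le> 1} \<subseteq> cube r R"
proof -
  obtain m K where m: "0 < m" and "0 < K"
    and bounds: "\<And>x. x \<in> rvec r \<Longrightarrow> m * sup_norm r x powr c \<le> f x \<and> f x \<le> K * sup_norm r x powr c"
    using admissible_sup_norm_bounds[OF assms(1)] by blast
  have "sup_norm r x \<le> (1 / m) powr (1 / c)" if "x \<in> rvec r" "f x \<le> 1" for x
    using that bounds[of x] by (intro le_powr_inverse_if_mult_powr_le m assms(2) sup_norm_nonneg) auto
  then have "{x \<in> rvec r. f x \<le> 1} \<subseteq> cube r ((1 / m) powr (1 / c))"
    by (auto simp: mem_cube_iff)
  then show ?thesis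
    by (rule that[rotated]) simp
qed

lemma admissible_cube_subset_sublevel:
  assumes "admissible r c f" "c > 0" "0 < b"
  obtains \<delta> where "0 < \<delta>" "cube r \<delta> \<subseteq> {x \<in> rvec r. f x \<le> b}"
proof -
  obtain m K where "0 < m" and K: "0 < K"
    and bounds: "\<And>x. x \<in> rvec r \<Longrightarrow> m * sup_norm r x powr c \<le> f x \<and> f x \<le> K * sup_norm r x powr c"
    using admissible_sup_norm_bounds[OF assms(1)] by blast
  define \<delta> where "\<delta> = (b / K) powr (1 / c)"
  have \<delta>: "0 < \<delta>" "K * \<delta> powr c = b"
    using K assms(2,3) by (simp_all add: \<delta>_def powr_powr)
  have "f x \<le> b" if "x \<in> cube r \<delta>" for x
  proof -
    have "x \<in> rvec r" "sup_norm r x \<le> \<delta>"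
      using that \<delta> by (auto simp: mem_cube_iff)
    then have "K * sup_norm r x powr c \<le> K * \<delta> powr c"
      using K assms(2) sup_norm_nonneg[of r x] by (intro mult_left_mono powr_mono2) auto
    then have "f x \<le> K * \<delta> powr c"
      using bounds[of x] \<open>x \<in> rvec r\<close> by linarith
    then show ?thesis
      using \<delta> by simp
  qed
  then show ?thesis
    using that[of \<delta>] \<delta> cube_subset_rvec by blast
qed

lemma abs_le_if_mem_cube: "u \<in> cube r R \<Longrightarrow> i < r \<Longrightarrow> \<bar>u i\<bar> \<le> R"
  using PiE_mem[of u "{..<r}" "\<lambda>_. {-R..R}" i] by (auto simp: cube_def abs_le_iff)

lemma mem_cube_if_close:
  assumes "u \<in> cube r R \<or> v \<in> cube r R" "u \<in> rvec r" "v \<in> rvec r"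
    and "\<And>i. i < r \<Longrightarrow> \<bar>u i - v i\<bar> \<le> a"
  shows "u \<in> cube r (R + a) \<and> v \<in> cube r (R + a)"
proof -
  have "u i \<in> {-(R + a)..R + a} \<and> v i \<in> {-(R + a)..R + a}" if "i < r" for i
  proof -
    have "\<bar>u i\<bar> \<le> R \<or> \<bar>v i\<bar> \<le> R"
      using assms(1) that abs_le_if_mem_cube by blast
    then show ?thesis
      using assms(4)[OF that] by (auto simp: abs_le_iff)
  qed
  then show ?thesis
    using assms(2,3) by (auto simp: cube_def rvec_def PiE_iff)
qed

section \<open>Rounding down changes an admissible function little\<close>

lemma dist_fun_le_if_dist_le:
  fixes u v :: "nat \<Rightarrow> real"
  assumes "\<And>j. dist (u j) (v j) \<le> a"
  shows "dist u v \<le> 2 * a + (1/2) ^ N"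
proof -
  have "finite {dist (u (from_nat n)) (v (from_nat n)) |n. n \<le> N}"
    by (simp add: finite_image_set)
  then have "Max {dist (u (from_nat n)) (v (from_nat n)) |n. n \<le> N} \<le> a"
    using assms by (subst Max_le_iff) auto
  then show ?thesis
    using dist_fun_le_dist_first_terms[of u v N] by linarith
qed

text \<open>The metric on \<open>nat \<Rightarrow> real\<close> is that of the product topology; on the cube it is
  controlled by the largest coordinate difference.\<close>

lemma continuous_on_cube_uniformly:
  fixes f :: "(nat \<Rightarrow> real) \<Rightarrow> real"
  assumes "continuous_on (cube r R) f" "0 < e"
  obtains d where "0 < d"
    "\<And>u v. u \<in> cube r R \<Longrightarrow> v \<in> cube r R \<Longrightarrow> (\<And>i. i < r \<Longrightarrow> \<bar>u i - v i\<bar> \<le> d) \<Longrightarrow> \<bar>f u - f v\<bar> < e"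
proof -
  obtain d where d: "0 < d" and unif: "\<forall>u\<in>cube r R. \<forall>v\<in>cube r R. dist v u < d \<longrightarrow> dist (f v) (f u) < e"
    using compact_uniformly_continuous[OF assms(1) compact_cube] assms(2)
    unfolding uniformly_continuous_on_def by metis
  obtain N where N: "(1/2::real) ^ N < d / 2"
    using real_arch_pow_inv[of "d/2" "1/2::real"] d by auto
  show ?thesis
  proof (rule that)
    show "0 < d / 4"
      using d by simp
  next
    fix u v assume u: "u \<in> cube r R" and v: "v \<in> cube r R"
      and close: "\<And>i. i < r \<Longrightarrow> \<bar>u i - v i\<bar> \<le> d / 4"
    have "dist (u j) (v j) \<le> d / 4" for j
      using close[of j] u v d by (cases "j < r") (auto simp: cube_def dist_real_def PiE_def extensional_def)
    then have "dist u v \<le> 2 * (d / 4) + (1/2) ^ N"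
      by (rule dist_fun_le_if_dist_le)
    then have "dist v u < d"
      using N by (simp add: dist_commute)
    then show "\<bar>f u - f v\<bar> < e"
      using unif u v by (auto simp: dist_real_def abs_minus_commute)
  qed
qed

lemma floor_vec_in_rvec: "floor_vec r x \<in> rvec r"
  using floor_vec_in_zvec zvec_subset_rvec by blast

lemma abs_diff_floor_vec_le:
  assumes "0 < t" "i < r"
  shows "\<bar>scale_vec r (1/t) x i - scale_vec r (1/t) (floor_vec r x) i\<bar> \<le> 1/t"
proof -
  have "\<bar>x i - real_of_int \<lfloor>x i\<rfloor>\<bar> \<le> 1"
    by linarith
  then have "\<bar>x i - real_of_int \<lfloor>x i\<rfloor>\<bar> / t \<le> 1/t"
    using assms(1) by (intro divide_right_mono) auto
  then show ?thesis
    using assms by (simp add: scale_vec_def floor_vec_def diff_divide_distrib[symmetric])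
qed

text \<open>Scaling by \<open>1/t\<close> moves \<open>x\<close> and its rounding into the fixed cube of radius \<open>R + 1\<close>,
  where they are \<open>1/t\<close>-close.\<close>

lemma admissible_floor_vec_approx_scaled:
  assumes adm: "admissible r c f"
    and small: "{x \<in> rvec r. f x \<le> 1} \<subseteq> cube r R"
    and unif: "\<And>u v. u \<in> cube r (R + 1) \<Longrightarrow> v \<in> cube r (R + 1) \<Longrightarrow>
      (\<And>i. i < r \<Longrightarrow> \<bar>u i - v i\<bar> \<le> d) \<Longrightarrow> \<bar>f u - f v\<bar> < e"
    and t: "1 \<le> t" "1/t \<le> d"
    and x: "x \<in> rvec r" and le: "f x \<le> t powr c \<or> f (floor_vec r x) \<le> t powr c"
  shows "\<bar>f x - f (floor_vec r x)\<bar> \<le> e * t powr c"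
proof -
  define u v where "u = scale_vec r (1/t) x" and "v = scale_vec r (1/t) (floor_vec r x)"
  have "f (scale_vec r (1/t) z) = f z / t powr c" if "z \<in> rvec r" for z
    using admissible_scale[OF adm that, of "1/t"] t by (simp add: powr_divide)
  then have fu: "f x = t powr c * f u" and fv: "f (floor_vec r x) = t powr c * f v"
    using x floor_vec_in_rvec t by (simp_all add: u_def v_def)
  have "f u \<le> 1 \<or> f v \<le> 1"
    using le t by (auto simp: fu fv)
  then have in_cube: "u \<in> cube r R \<or> v \<in> cube r R"
    using small scale_vec_in_rvec unfolding u_def v_def by blast
  have "1/t \<le> 1"
    using t by simp
  then have close: "\<bar>u i - v i\<bar> \<le> 1" "\<bar>u i - v i\<bar> \<le> d" if "i < r" for i
    using abs_diff_floor_vec_le[of t i r x] that t unfolding u_def v_def by linarith+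
  have "u \<in> cube r (R + 1) \<and> v \<in> cube r (R + 1)"
    using in_cube close(1) by (intro mem_cube_if_close) (simp_all add: u_def v_def)
  then have uv: "\<bar>f u - f v\<bar> \<le> e"
    using unif close(2) by (simp add: less_imp_le)
  have "\<bar>f x - f (floor_vec r x)\<bar> = t powr c * \<bar>f u - f v\<bar>"
    unfolding fu fv right_diff_distrib[symmetric] abs_mult by simp
  also have "\<dots> \<le> t powr c * e"
    using uv by (intro mult_left_mono) auto
  finally show ?thesis
    by (simp add: mult.commute)
qed

lemma admissible_floor_vec_approx:
  assumes adm: "admissible r c f" and c: "0 < c" and e: "0 < e"
  shows "\<forall>\<^sub>F B in at_top. \<forall>x\<in>rvec r. f x \<le> B \<or> f (floor_vec r x) \<le> B \<longrightarrow>
           \<bar>f x - f (floor_vec r x)\<bar> \<le> e * B"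
proof -
  obtain R where small: "{x \<in> rvec r. f x \<le> 1} \<subseteq> cube r R"
    using admissible_sublevel_subset_cube[OF adm c] by blast
  have "continuous_on (cube r (R + 1)) f"
    using admissible_continuous_on[OF adm] cube_subset_rvec by (rule continuous_on_subset)
  then obtain d where d: "0 < d" and unif: "\<And>u v. u \<in> cube r (R + 1) \<Longrightarrow> v \<in> cube r (R + 1) \<Longrightarrow>
      (\<And>i. i < r \<Longrightarrow> \<bar>u i - v i\<bar> \<le> d) \<Longrightarrow> \<bar>f u - f v\<bar> < e"
    using continuous_on_cube_uniformly[OF _ e] by blast
  have "\<bar>f x - f (floor_vec r x)\<bar> \<le> e * B"
    if B: "max 1 (1/d) powr c \<le> B" and x: "x \<in> rvec r" and le: "f x \<le> B \<or> f (floor_vec r x) \<le> B"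
    for B x
  proof -
    define t where "t = B powr (1/c)"
    have "0 < max 1 (1/d) powr c"
      by simp
    then have B_pos: "0 < B"
      using B by linarith
    have "max 1 (1/d) = (max 1 (1/d) powr c) powr (1/c)"
      using c by (simp add: powr_powr)
    also have "\<dots> \<le> t"
      unfolding t_def using B c by (intro powr_mono2) auto
    finally have t: "1 \<le> t" "1/t \<le> d"
      using d by (auto simp: divide_le_eq mult.commute dest: order_trans[OF max.cobounded2])
    have tc: "t powr c = B"
      unfolding t_def using B_pos c by (simp add: powr_powr)
    show ?thesis
      using admissible_floor_vec_approx_scaled[OF adm small unif t x, unfolded tc] le by blast
  qed
  then show ?thesis
    unfolding eventually_at_top_linorder by blast
qed

section \<open>Volume of the sublevel sets\<close>

lemma emeasure_leb_vec_sublevel_scale: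
  assumes "0 < s" "f \<in> borel_measurable (leb_vec r)"
    and hom: "\<And>x. x \<in> rvec r \<Longrightarrow> f (scale_vec r s x) = s powr c * f x"
  shows "emeasure (leb_vec r) {y \<in> rvec r. f y \<le> s powr c * t}
       = ennreal s ^ r * emeasure (leb_vec r) {y \<in> rvec r. f y \<le> t}"
proof -
  have "{y \<in> space (leb_vec r). f y \<le> s powr c * t} \<in> sets (leb_vec r)"
    using assms(2) by (intro borel_measurable_le) auto
  then have sets: "{y \<in> rvec r. f y \<le> s powr c * t} \<in> sets (leb_vec r)"
    by (simp only: space_leb_vec)
  have "f (scale_vec r s y) \<le> s powr c * t \<longleftrightarrow> f y \<le> t" if "y \<in> rvec r" for y
    using hom[OF that] assms(1) by (simp add: mult_le_cancel_left_pos)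
  then have "scale_vec r s -` {y \<in> rvec r. f y \<le> s powr c * t} \<inter> rvec r = {y \<in> rvec r. f y \<le> t}"
    by auto
  then show ?thesis
    using emeasure_leb_vec_scale[OF assms(1) sets] by simp
qed

text \<open>Fubini: integrate the volumes of the slices over \<open>x\<close>, and substitute \<open>x = s x'\<close>.\<close>

lemma emeasure_V_set_scale:
  assumes "0 < s" "f1 \<in> borel_measurable (leb_vec r1)" "f2 \<in> borel_measurable (leb_vec r2)"
    and hom1: "\<And>x. x \<in> rvec r1 \<Longrightarrow> f1 (scale_vec r1 s x) = s powr c * f1 x"
    and hom2: "\<And>y. y \<in> rvec r2 \<Longrightarrow> f2 (scale_vec r2 s y) = s powr c * f2 y"
  shows "emeasure (leb_vec r1 \<Otimes>\<^sub>M leb_vec r2) (V_set r1 r2 f1 f2 (s powr c * B))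
       = ennreal s ^ (r1 + r2) * emeasure (leb_vec r1 \<Otimes>\<^sub>M leb_vec r2) (V_set r1 r2 f1 f2 B)"
proof -
  interpret M2: sigma_finite_measure "leb_vec r2"
    by (rule sigma_finite_leb_vec)
  define G where "G B x = emeasure (leb_vec r2) (Pair x -` V_set r1 r2 f1 f2 B)" for B x
  have V_sets: "V_set r1 r2 f1 f2 B' \<in> sets (leb_vec r1 \<Otimes>\<^sub>M leb_vec r2)" for B'
    using assms(2,3) by (rule V_set_in_sets)
  have G_measurable: "G B' \<in> borel_measurable (leb_vec r1)" for B'
    unfolding G_def using V_sets by (rule M2.measurable_emeasure_Pair)
  have fubini: "emeasure (leb_vec r1 \<Otimes>\<^sub>M leb_vec r2) (V_set r1 r2 f1 f2 B') = (\<integral>\<^sup>+x. G B' x \<partial>leb_vec r1)" for B'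
    unfolding G_def using V_sets by (rule M2.emeasure_pair_measure_alt)
  have slice: "G B' x = emeasure (leb_vec r2) {y \<in> rvec r2. f2 y \<le> B' - f1 x}" if "x \<in> rvec r1" for B' x
    using that by (auto simp: G_def V_set_def intro!: arg_cong[where f="emeasure (leb_vec r2)"])
  have G_scale: "G (s powr c * B) (scale_vec r1 s x) = ennreal s ^ r2 * G B x" if x: "x \<in> rvec r1" for x
  proof -
    have "s powr c * B - f1 (scale_vec r1 s x) = s powr c * (B - f1 x)"
      using hom1[OF x] by (simp add: algebra_simps)
    then show ?thesis
      using x emeasure_leb_vec_sublevel_scale[OF assms(1,3) hom2] by (simp add: slice)
  qed
  have "emeasure (leb_vec r1 \<Otimes>\<^sub>M leb_vec r2) (V_set r1 r2 f1 f2 (s powr c * B))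
      = ennreal s ^ r1 * (\<integral>\<^sup>+x. G (s powr c * B) (scale_vec r1 s x) \<partial>leb_vec r1)"
    unfolding fubini by (rule nn_integral_leb_vec_scale[OF assms(1) G_measurable])
  also have "(\<integral>\<^sup>+x. G (s powr c * B) (scale_vec r1 s x) \<partial>leb_vec r1) = (\<integral>\<^sup>+x. ennreal s ^ r2 * G B x \<partial>leb_vec r1)"
    by (rule nn_integral_cong) (simp add: G_scale)
  also have "\<dots> = ennreal s ^ r2 * emeasure (leb_vec r1 \<Otimes>\<^sub>M leb_vec r2) (V_set r1 r2 f1 f2 B)"
    unfolding fubini using G_measurable by (rule nn_integral_cmult)
  finally show ?thesis
    by (simp add: power_add mult_ac)
qed

lemma emeasure_V_set_eq_powr:
  assumes c: "0 < c" and adm1: "admissible r1 c f1" and adm2: "admissible r2 c f2" and t: "0 < t"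
  shows "emeasure (leb_vec r1 \<Otimes>\<^sub>M leb_vec r2) (V_set r1 r2 f1 f2 t)
       = ennreal (t powr ((r1 + r2) / c)) * emeasure (leb_vec r1 \<Otimes>\<^sub>M leb_vec r2) (V_set r1 r2 f1 f2 1)"
proof -
  define s where "s = t powr (1 / c)"
  have s: "0 < s" "s powr c * 1 = t"
    unfolding s_def using t c by (simp_all add: powr_powr)
  have "ennreal s ^ (r1 + r2) = ennreal (s ^ (r1 + r2))"
    using s by (simp add: ennreal_power)
  also have "s ^ (r1 + r2) = s powr real (r1 + r2)"
    by (rule powr_realpow[OF s(1), symmetric])
  also have "\<dots> = t powr ((r1 + r2) / c)"
    unfolding s_def using t by (simp add: powr_powr)
  finally have "ennreal s ^ (r1 + r2) = ennreal (t powr ((r1 + r2) / c))" .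
  moreover have "emeasure (leb_vec r1 \<Otimes>\<^sub>M leb_vec r2) (V_set r1 r2 f1 f2 (s powr c * 1))
      = ennreal s ^ (r1 + r2) * emeasure (leb_vec r1 \<Otimes>\<^sub>M leb_vec r2) (V_set r1 r2 f1 f2 1)"
    using s(1) admissible_scale[OF adm1] admissible_scale[OF adm2]
    by (intro emeasure_V_set_scale admissible_borel_measurable[OF adm1] admissible_borel_measurable[OF adm2])
       auto
  ultimately show ?thesis
    using s(2) by simp
qed

lemma cube_in_sets: "cube r R \<in> sets (leb_vec r)"
  unfolding cube_def leb_vec_def by (intro sets_PiM_I_finite) auto

lemma emeasure_cube: "0 \<le> R \<Longrightarrow> emeasure (leb_vec r) (cube r R) = ennreal ((2 * R) ^ r)"
  unfolding cube_def by (simp add: emeasure_leb_vec_PiE ennreal_power)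

lemma emeasure_cube_Times:
  assumes "0 \<le> R1" "0 \<le> R2"
  shows "emeasure (leb_vec r1 \<Otimes>\<^sub>M leb_vec r2) (cube r1 R1 \<times> cube r2 R2)
       = ennreal ((2 * R1) ^ r1 * (2 * R2) ^ r2)"
proof -
  interpret M2: sigma_finite_measure "leb_vec r2"
    by (rule sigma_finite_leb_vec)
  have "emeasure (leb_vec r1 \<Otimes>\<^sub>M leb_vec r2) (cube r1 R1 \<times> cube r2 R2)
      = emeasure (leb_vec r1) (cube r1 R1) * emeasure (leb_vec r2) (cube r2 R2)"
    by (intro M2.emeasure_pair_measure_Times cube_in_sets)
  then show ?thesis
    using assms by (simp add: emeasure_cube ennreal_mult)
qed

lemma emeasure_V_set_1_pos:
  assumes c: "0 < c" and adm1: "admissible r1 c f1" and adm2: "admissible r2 c f2"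
  shows "0 < emeasure (leb_vec r1 \<Otimes>\<^sub>M leb_vec r2) (V_set r1 r2 f1 f2 1)"
proof -
  obtain \<delta>1 where \<delta>1: "0 < \<delta>1" "cube r1 \<delta>1 \<subseteq> {x \<in> rvec r1. f1 x \<le> 1/2}"
    by (rule admissible_cube_subset_sublevel[OF adm1 c, of "1/2"]) auto
  obtain \<delta>2 where \<delta>2: "0 < \<delta>2" "cube r2 \<delta>2 \<subseteq> {y \<in> rvec r2. f2 y \<le> 1/2}"
    by (rule admissible_cube_subset_sublevel[OF adm2 c, of "1/2"]) auto
  have "cube r1 \<delta>1 \<times> cube r2 \<delta>2 \<subseteq> V_set r1 r2 f1 f2 1"
  proof (rule subrelI)
    fix x y assume "(x, y) \<in> cube r1 \<delta>1 \<times> cube r2 \<delta>2"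
    then have "x \<in> rvec r1" "f1 x \<le> 1/2" "y \<in> rvec r2" "f2 y \<le> 1/2"
      using \<delta>1(2) \<delta>2(2) by auto
    then show "(x, y) \<in> V_set r1 r2 f1 f2 1"
      by (simp add: V_set_def)
  qed
  then have "emeasure (leb_vec r1 \<Otimes>\<^sub>M leb_vec r2) (cube r1 \<delta>1 \<times> cube r2 \<delta>2)
      \<le> emeasure (leb_vec r1 \<Otimes>\<^sub>M leb_vec r2) (V_set r1 r2 f1 f2 1)"
    using adm1 adm2 by (intro emeasure_mono V_set_in_sets admissible_borel_measurable)
  moreover have "0 < emeasure (leb_vec r1 \<Otimes>\<^sub>M leb_vec r2) (cube r1 \<delta>1 \<times> cube r2 \<delta>2)"
    using \<delta>1(1) \<delta>2(1) by (simp add: emeasure_cube_Times)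
  ultimately show ?thesis
    by (rule order_less_le_trans[rotated])
qed

lemma emeasure_V_set_1_finite:
  assumes c: "0 < c" and adm1: "admissible r1 c f1" and adm2: "admissible r2 c f2"
  shows "emeasure (leb_vec r1 \<Otimes>\<^sub>M leb_vec r2) (V_set r1 r2 f1 f2 1) < \<infinity>"
proof -
  obtain R1 where R1: "0 \<le> R1" "{x \<in> rvec r1. f1 x \<le> 1} \<subseteq> cube r1 R1"
    using admissible_sublevel_subset_cube[OF adm1 c] .
  obtain R2 where R2: "0 \<le> R2" "{y \<in> rvec r2. f2 y \<le> 1} \<subseteq> cube r2 R2"
    using admissible_sublevel_subset_cube[OF adm2 c] .
  have "V_set r1 r2 f1 f2 1 \<subseteq> cube r1 R1 \<times> cube r2 R2"
  proof (rule subrelI)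
    fix x y assume "(x, y) \<in> V_set r1 r2 f1 f2 1"
    then have xy: "x \<in> rvec r1" "y \<in> rvec r2" "f1 x + f2 y \<le> 1"
      by (simp_all add: V_set_def)
    then have "f1 x \<le> 1" "f2 y \<le> 1"
      using admissible_nonneg[OF adm1 xy(1)] admissible_nonneg[OF adm2 xy(2)] by linarith+
    then show "(x, y) \<in> cube r1 R1 \<times> cube r2 R2"
      using R1(2) R2(2) xy by blast
  qed
  then have "emeasure (leb_vec r1 \<Otimes>\<^sub>M leb_vec r2) (V_set r1 r2 f1 f2 1)
      \<le> emeasure (leb_vec r1 \<Otimes>\<^sub>M leb_vec r2) (cube r1 R1 \<times> cube r2 R2)"
    by (rule emeasure_mono) (simp add: cube_in_sets)
  then show ?thesis
    using R1(1) R2(1) by (simp add: emeasure_cube_Times order_le_less_trans)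
qed

lemma measure_V_set_eq_powr:
  assumes "0 < c" "admissible r1 c f1" "admissible r2 c f2" "0 < t"
  shows "measure (leb_vec r1 \<Otimes>\<^sub>M leb_vec r2) (V_set r1 r2 f1 f2 t)
       = t powr ((r1 + r2) / c) * measure (leb_vec r1 \<Otimes>\<^sub>M leb_vec r2) (V_set r1 r2 f1 f2 1)"
  using emeasure_V_set_eq_powr[OF assms] by (simp add: measure_def enn2real_mult)

lemma measure_V_set_1_pos:
  assumes "0 < c" "admissible r1 c f1" "admissible r2 c f2"
  shows "0 < measure (leb_vec r1 \<Otimes>\<^sub>M leb_vec r2) (V_set r1 r2 f1 f2 1)"
  using emeasure_V_set_1_pos[OF assms] emeasure_V_set_1_finite[OF assms]
  by (simp add: measure_def enn2real_positive_iff)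

lemma V_set_fmeasurable:
  assumes "0 < c" "admissible r1 c f1" "admissible r2 c f2" "0 < t"
  shows "V_set r1 r2 f1 f2 t \<in> fmeasurable (leb_vec r1 \<Otimes>\<^sub>M leb_vec r2)"
proof (rule fmeasurableI)
  show "V_set r1 r2 f1 f2 t \<in> sets (leb_vec r1 \<Otimes>\<^sub>M leb_vec r2)"
    using assms(2,3) by (intro V_set_in_sets admissible_borel_measurable)
  show "emeasure (leb_vec r1 \<Otimes>\<^sub>M leb_vec r2) (V_set r1 r2 f1 f2 t) < \<infinity>"
    using emeasure_V_set_1_finite[OF assms(1-3)]
    by (simp add: emeasure_V_set_eq_powr[OF assms] ennreal_mult_less_top)
qed

lemma I_set_lift_between_V_set:
  assumes c: "0 < c" and adm1: "admissible r1 c f1" and adm2: "admissible r2 c f2" and e: "0 < e"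
  shows "\<forall>\<^sub>F B in at_top. V_set r1 r2 f1 f2 ((1 - e) * B) \<subseteq> I_set_lift r1 r2 f1 f2 B
                        \<and> I_set_lift r1 r2 f1 f2 B \<subseteq> V_set r1 r2 f1 f2 ((1 + e) * B)"
  using admissible_floor_vec_approx[OF adm1 c e] eventually_ge_at_top[of 0]
proof eventually_elim
  case (elim B)
  then have approx: "\<And>x. x \<in> rvec r1 \<Longrightarrow> f1 x \<le> B \<or> f1 (floor_vec r1 x) \<le> B \<Longrightarrow>
      f1 (floor_vec r1 x) \<le> f1 x + e * B \<and> f1 x \<le> f1 (floor_vec r1 x) + e * B"
    by (auto simp: abs_le_iff)
  have "0 \<le> e * B"
    using e elim(2) by simp
  show ?case
  proof (intro conjI subrelI)
    fix x y assume "(x, y) \<in> V_set r1 r2 f1 f2 ((1 - e) * B)"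
    then have xy: "x \<in> rvec r1" "y \<in> rvec r2" "f1 x + f2 y \<le> B - e * B"
      by (simp_all add: V_set_def algebra_simps)
    moreover have "0 \<le> f2 y"
      using admissible_nonneg[OF adm2 xy(2)] .
    ultimately have "f1 (floor_vec r1 x) + f2 y \<le> B"
      using approx[of x] \<open>0 \<le> e * B\<close> by linarith
    then show "(x, y) \<in> I_set_lift r1 r2 f1 f2 B"
      using xy by (simp add: I_set_lift_def)
  next
    fix x y assume "(x, y) \<in> I_set_lift r1 r2 f1 f2 B"
    then have xy: "x \<in> rvec r1" "y \<in> rvec r2" "f1 (floor_vec r1 x) + f2 y \<le> B"
      by (simp_all add: I_set_lift_def)
    moreover have "0 \<le> f2 y"
      using admissible_nonneg[OF adm2 xy(2)] .
    ultimately have "f1 x + f2 y \<le> B + e * B"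
      using approx[of x] by linarith
    then show "(x, y) \<in> V_set r1 r2 f1 f2 ((1 + e) * B)"
      using xy by (simp add: V_set_def algebra_simps)
  qed
qed

lemma I_set_V_set_ratio_bounds:
  assumes c: "0 < c" and adm1: "admissible r1 c f1" and adm2: "admissible r2 c f2"
    and e: "0 < e" "e < 1"
  shows "\<forall>\<^sub>F B in at_top.
    (1 - e) powr ((r1 + r2) / c) \<le> measure (count_zvec r1 \<Otimes>\<^sub>M leb_vec r2) (I_set r1 r2 f1 f2 B)
                                   / measure (leb_vec r1 \<Otimes>\<^sub>M leb_vec r2) (V_set r1 r2 f1 f2 B) \<and>
    measure (count_zvec r1 \<Otimes>\<^sub>M leb_vec r2) (I_set r1 r2 f1 f2 B)
      / measure (leb_vec r1 \<Otimes>\<^sub>M leb_vec r2) (V_set r1 r2 f1 f2 B) \<le> (1 + e) powr ((r1 + r2) / c)"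
  using I_set_lift_between_V_set[OF c adm1 adm2 e(1)] eventually_gt_at_top[of 0]
proof eventually_elim
  case (elim B)
  let ?M = "leb_vec r1 \<Otimes>\<^sub>M leb_vec r2" and ?d = "(r1 + r2) / c"
  let ?vol = "\<lambda>t. measure ?M (V_set r1 r2 f1 f2 t)"
  let ?lift = "measure ?M (I_set_lift r1 r2 f1 f2 B)"
  have vol: "?vol (k * B) = k powr ?d * ?vol B" if "0 < k" for k
    using that elim(2) measure_V_set_eq_powr[OF c adm1 adm2, of "k * B"]
      measure_V_set_eq_powr[OF c adm1 adm2, of B]
    by (simp add: powr_mult)
  have vol_B_pos: "0 < ?vol B"
    using elim(2) measure_V_set_1_pos[OF c adm1 adm2] measure_V_set_eq_powr[OF c adm1 adm2, of B]
    by simp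
  have upper_fmeasurable: "V_set r1 r2 f1 f2 ((1 + e) * B) \<in> fmeasurable ?M"
    using e elim(2) by (intro V_set_fmeasurable[OF c adm1 adm2]) simp
  have lower_sets: "V_set r1 r2 f1 f2 ((1 - e) * B) \<in> sets ?M"
    using adm1 adm2 by (intro V_set_in_sets admissible_borel_measurable)
  have lift_sets: "I_set_lift r1 r2 f1 f2 B \<in> sets ?M"
    using adm2 by (intro I_set_lift_in_sets admissible_borel_measurable)
  have lift_fmeasurable: "I_set_lift r1 r2 f1 f2 B \<in> fmeasurable ?M"
    by (rule fmeasurableI2[OF upper_fmeasurable conjunct2[OF elim(1)] lift_sets])
  have "(1 - e) powr ?d * ?vol B \<le> ?lift"
    using measure_mono_fmeasurable[OF conjunct1[OF elim(1)] lower_sets lift_fmeasurable] vol[of "1 - e"] e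
    by simp
  moreover have "?lift \<le> (1 + e) powr ?d * ?vol B"
    using measure_mono_fmeasurable[OF conjunct2[OF elim(1)] lift_sets upper_fmeasurable] vol[of "1 + e"] e
    by simp
  moreover have "measure (count_zvec r1 \<Otimes>\<^sub>M leb_vec r2) (I_set r1 r2 f1 f2 B) = ?lift"
    using emeasure_I_set_eq_lift[OF admissible_borel_measurable[OF adm2]] by (simp add: measure_def)
  ultimately show ?case
    using vol_B_pos by (simp add: le_divide_eq divide_le_eq)
qed

lemma tendsto_1_if_powr_bounds:
  fixes q :: "'a \<Rightarrow> real"
  assumes "\<And>e. 0 < e \<Longrightarrow> e < 1 \<Longrightarrow> \<forall>\<^sub>F x in F. (1 - e) powr d \<le> q x \<and> q x \<le> (1 + e) powr d"
  shows "(q \<longlongrightarrow> 1) F"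
proof (rule tendstoI)
  fix \<epsilon> :: real assume "0 < \<epsilon>"
  have "((\<lambda>e. (1 - e) powr d) \<longlongrightarrow> (1 - 0) powr d) (at_right (0::real))"
    and "((\<lambda>e. (1 + e) powr d) \<longlongrightarrow> (1 + 0) powr d) (at_right (0::real))"
    by (intro tendsto_intros; simp)+
  then have "\<forall>\<^sub>F e in at_right 0. dist ((1 - e) powr d) 1 < \<epsilon>"
    and "\<forall>\<^sub>F e in at_right 0. dist ((1 + e) powr d) 1 < \<epsilon>"
    using \<open>0 < \<epsilon>\<close> by (simp_all add: tendstoD)
  moreover have "\<forall>\<^sub>F e in at_right 0. e \<in> {0<..<(1::real)}"
    by (rule eventually_at_right_real) simp
  ultimately have "\<forall>\<^sub>F e in at_right 0. e \<in> {0<..<1} \<and> dist ((1 - e) powr d) 1 < \<epsilon> \<and> dist ((1 + e) powr d) 1 < \<epsilon>"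
    by eventually_elim simp
  then obtain e where e: "0 < e" "e < 1" "dist ((1 - e) powr d) 1 < \<epsilon>" "dist ((1 + e) powr d) 1 < \<epsilon>"
    using eventually_happens'[OF trivial_limit_at_right_real] by auto
  show "\<forall>\<^sub>F x in F. dist (q x) 1 < \<epsilon>"
    using assms[OF e(1,2)] by eventually_elim (use e(3,4) in \<open>auto simp: dist_real_def abs_less_iff\<close>)
qed

theorem mainTheorem1:
  fixes r1 r2 :: nat and c :: real
    and f1 f2 :: "(nat \<Rightarrow> real) \<Rightarrow> real"
  assumes "c > 0"
    and "admissible r1 c f1"
    and "admissible r2 c f2"
  shows "((\<lambda>B. measure (count_zvec r1 \<Otimes>\<^sub>M leb_vec r2) (I_set r1 r2 f1 f2 B)
              / measure (leb_vec r1 \<Otimes>\<^sub>M leb_vec r2) (V_set r1 r2 f1 f2 B))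
          \<longlongrightarrow> 1) at_top"
  using I_set_V_set_ratio_bounds[OF assms] by (rule tendsto_1_if_powr_bounds)

end
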